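(* Let $n>2$ be an integer, $q\in\mathbb{C}^\times$ and $\beta=-q-q^{-1}$. Every word $c$ in the generators $\Omega,\Omega^{-1},e_0,\dots,e_{n-1}$ of the affine Temperley--Lieb algebra $\mathsf{aTL}_n(\beta)$ can be rewritten, using the defining relations, in one of the three following forms: (i) $c=\Omega^k$ for some $k\in\mathbb{Z}$ (with $\Omega^0=\mathbf{1}$); (ii) $c=w$, where $w$ is a word in the generators $e_j$ only; (iii) $c=\Omega\, w$, where $w$ is a word in the generators $e_j$ only.
   Context: For $n>2$, the affine Temperley--Lieb algebra $\mathsf{aTL}_n(\beta)$ is the unital associative $\mathbb{C}$-algebra generated by $\Omega,\Omega^{-1},e_0,\dots,e_{n-1}$ subject to the relations (indices taken modulo $n$): $e_j^2=\beta e_j$, $e_je_{j\pm1}e_j=e_j$, $e_ie_j=e_je_i$ for $|i-j|>1$, $\Omega e_j\Omega^{-1}=e_{j-1}$, $\Omega\Omega^{-1}=\Omega^{-1}\Omega=\mathbf{1}$, and $\Omega^2e_1=e_{n-1}e_{n-2}\cdots e_2e_1$. *)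

theory Defs
  imports Complex_Main
begin

text \<open>Generators of the affine Temperley--Lieb algebra: Om = Omega, OmI = Omega inverse,
  E j = e_j (only j < n is a valid generator).\<close>
datatype gen = Om | OmI | E nat

definition valid_gen :: "nat \<Rightarrow> gen \<Rightarrow> bool" where
  "valid_gen n g = (case g of E j \<Rightarrow> j < n | _ \<Rightarrow> True)"

text \<open>Elements of the free associative C-algebra on the generators are represented as
  (finitely supported) coefficient functions on words. The basis element of a word:\<close>
definition wd :: "gen list \<Rightarrow> gen list \<Rightarrow> complex" where
  "wd w = (\<lambda>x. if x = w then 1 else 0)"

text \<open>Two-sided multiplication u * f * v by words u, v.\<close>
definition sw :: "gen list \<Rightarrow> (gen list \<Rightarrow> complex) \<Rightarrow> gen list \<Rightarrow> gen list \<Rightarrow> complex" where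
  "sw u f v = (\<lambda>x. if length u + length v \<le> length x \<and> take (length u) x = u
       \<and> drop (length x - length v) x = v
     then f (take (length x - length v - length u) (drop (length u) x)) else 0)"

definition aTL_rel :: "nat \<Rightarrow> complex \<Rightarrow> ((gen list \<Rightarrow> complex) \<times> (gen list \<Rightarrow> complex)) set" where
  "aTL_rel n \<beta> =
     {(wd [E j, E j], \<lambda>x. \<beta> * wd [E j] x) | j. j < n}
   \<union> {(wd [E j, E ((j + 1) mod n), E j], wd [E j]) | j. j < n}
   \<union> {(wd [E j, E ((j + n - 1) mod n), E j], wd [E j]) | j. j < n}
   \<union> {(wd [E i, E j], wd [E j, E i]) | i j. i < n \<and> j < n \<and> i \<noteq> j
          \<and> (i + 1) mod n \<noteq> j \<and> (j + 1) mod n \<noteq> i}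
   \<union> {(wd [Om, E j, OmI], wd [E ((j + n - 1) mod n)]) | j. j < n}
   \<union> {(wd [Om, OmI], wd []), (wd [OmI, Om], wd [])}
   \<union> {(wd [Om, Om, E 1], wd (map E (rev [1..<n])))}"

inductive_set aTL_ideal :: "nat \<Rightarrow> complex \<Rightarrow> (gen list \<Rightarrow> complex) set"
  for n :: nat and \<beta> :: complex where
  zero: "(\<lambda>_. 0) \<in> aTL_ideal n \<beta>"
| step: "\<lbrakk>f \<in> aTL_ideal n \<beta>; (l, r) \<in> aTL_rel n \<beta>;
          \<forall>g\<in>set u. valid_gen n g; \<forall>g\<in>set v. valid_gen n g\<rbrakk>
         \<Longrightarrow> (\<lambda>x. f x + c * sw u (\<lambda>y. l y - r y) v x) \<in> aTL_ideal n \<beta>"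

definition aTL_eq :: "nat \<Rightarrow> complex \<Rightarrow> (gen list \<Rightarrow> complex) \<Rightarrow> (gen list \<Rightarrow> complex) \<Rightarrow> bool" where
  "aTL_eq n \<beta> a b \<longleftrightarrow> (\<lambda>x. a x - b x) \<in> aTL_ideal n \<beta>"

definition Omega_pow :: "int \<Rightarrow> gen list" where
  "Omega_pow k = (if 0 \<le> k then replicate (nat k) Om else replicate (nat (- k)) OmI)"

end

theory Submission
  imports Defs
begin

text \<open>Conjugation by \<Omega> rotates the indices of the e_j, so every word equals \<Omega>^k w
  with w a word in the e_j. Rotating the relation \<Omega>^2 e_1 = e_(n-1) ... e_1 shows that
  every \<Omega>^2 e_j is a word in the e_i. Multiplying that relation on the right by
  e_2, ..., e_(n-1) and simplifying with e_(i+1) e_i e_(i+1) = e_(i+1) gives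
  \<Omega>^-2 e_(n-1) = e_1 ... e_(n-1), and rotating it shows the same for every \<Omega>^-2 e_j.
  Hence, while w is nonempty, factors \<Omega>^2 and \<Omega>^-2 can be absorbed into w until
  k \<in> {0, 1}, using \<Omega>^-1 = \<Omega> \<Omega>^-2 for k = -1; if w is empty, the word is \<Omega>^k.\<close>

lemma sw_append_eq: "sw u f v (u @ m @ v) = f m"
  unfolding sw_def by simp

lemma sw_eq_0:
  assumes "\<forall>m. x \<noteq> u @ m @ v"
  shows "sw u f v x = 0"
proof -
  have False
    if len: "length u + length v \<le> length x" and pre: "take (length u) x = u"
      and suf: "drop (length x - length v) x = v"
  proof -
    let ?m = "take (length x - length v - length u) (drop (length u) x)"
    have "drop (length x - length v - length u) (drop (length u) x) = v"
      using len suf by (simp add: drop_drop)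
    then have "drop (length u) x = ?m @ v"
      by (metis append_take_drop_id)
    then have "x = u @ ?m @ v"
      using pre by (metis append_take_drop_id)
    with assms show False by blast
  qed
  then show ?thesis unfolding sw_def by auto
qed

lemma sw_sw: "sw a (sw u f v) b = sw (a @ u) f (v @ b)"
proof
  fix x
  show "sw a (sw u f v) b x = sw (a @ u) f (v @ b) x"
  proof (cases "\<exists>m. x = a @ u @ m @ v @ b")
    case True
    then obtain m where "x = a @ u @ m @ v @ b" by blast
    then show ?thesis
      using sw_append_eq[of a "sw u f v" b "u @ m @ v"] sw_append_eq[of "a @ u" f "v @ b" m]
      by (simp add: sw_append_eq)
  next
    case no_match: False
    then have rhs: "sw (a @ u) f (v @ b) x = 0" by (intro sw_eq_0) simp
    show ?thesis
    proof (cases "\<exists>y. x = a @ y @ b")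
      case True
      then obtain y where y: "x = a @ y @ b" by blast
      with no_match have "sw u f v y = 0" by (intro sw_eq_0) auto
      then show ?thesis using rhs y by (simp add: sw_append_eq)
    next
      case False
      then show ?thesis using rhs by (simp add: sw_eq_0)
    qed
  qed
qed

lemma sw_add_scale: "sw u (\<lambda>y. f y + c * g y) v = (\<lambda>x. sw u f v x + c * sw u g v x)"
  unfolding sw_def by auto

lemma sw_diff: "sw u (\<lambda>y. f y - g y) v = (\<lambda>x. sw u f v x - sw u g v x)"
  unfolding sw_def by auto

lemma sw_zero: "sw u (\<lambda>_. 0) v = (\<lambda>_. 0)"
  unfolding sw_def by auto

lemma sw_Nil: "sw [] f [] = f"
  unfolding sw_def by auto

lemma sw_wd: "sw a (wd w) b = wd (a @ w @ b)"
proof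
  fix x
  show "sw a (wd w) b x = wd (a @ w @ b) x"
  proof (cases "\<exists>m. x = a @ m @ b")
    case True
    then obtain m where "x = a @ m @ b" by blast
    then show ?thesis by (simp add: sw_append_eq wd_def)
  next
    case False
    then show ?thesis by (auto simp: sw_eq_0 wd_def)
  qed
qed

lemma aTL_ideal_add:
  "g \<in> aTL_ideal n \<beta> \<Longrightarrow> f \<in> aTL_ideal n \<beta> \<Longrightarrow> (\<lambda>x. f x + g x) \<in> aTL_ideal n \<beta>"
proof (induction g rule: aTL_ideal.induct)
  case zero
  then show ?case by simp
next
  case (step g l r u v c)
  have "(\<lambda>x. (f x + g x) + c * sw u (\<lambda>y. l y - r y) v x) \<in> aTL_ideal n \<beta>"
    using step by (intro aTL_ideal.step) auto
  then show ?case by (simp add: add.assoc)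
qed

lemma aTL_ideal_scale: "f \<in> aTL_ideal n \<beta> \<Longrightarrow> (\<lambda>x. d * f x) \<in> aTL_ideal n \<beta>"
proof (induction f rule: aTL_ideal.induct)
  case zero
  then show ?case by (simp add: aTL_ideal.zero)
next
  case (step g l r u v c)
  have "(\<lambda>x. d * g x + (d * c) * sw u (\<lambda>y. l y - r y) v x) \<in> aTL_ideal n \<beta>"
    using step by (intro aTL_ideal.step) auto
  then show ?case by (simp add: algebra_simps)
qed

lemma aTL_ideal_sw:
  "f \<in> aTL_ideal n \<beta> \<Longrightarrow> \<forall>g\<in>set a. valid_gen n g \<Longrightarrow> \<forall>g\<in>set b. valid_gen n g
    \<Longrightarrow> sw a f b \<in> aTL_ideal n \<beta>"
proof (induction f rule: aTL_ideal.induct)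
  case zero
  then show ?case by (simp add: aTL_ideal.zero sw_zero)
next
  case (step g l r u v c)
  have "(\<lambda>x. sw a g b x + c * sw (a @ u) (\<lambda>y. l y - r y) (v @ b) x) \<in> aTL_ideal n \<beta>"
    using step by (intro aTL_ideal.step) auto
  then show ?case by (simp add: sw_add_scale sw_sw)
qed

definition word_eq :: "nat \<Rightarrow> complex \<Rightarrow> gen list \<Rightarrow> gen list \<Rightarrow> bool" where
  "word_eq n \<beta> u v \<longleftrightarrow> aTL_eq n \<beta> (wd u) (wd v)"

definition has_normal_form :: "nat \<Rightarrow> complex \<Rightarrow> gen list \<Rightarrow> bool" where
  "has_normal_form n \<beta> c \<longleftrightarrow>
     (\<exists>k. word_eq n \<beta> c (Omega_pow k))
   \<or> (\<exists>w. (\<forall>g\<in>set w. \<exists>j<n. g = E j) \<and> word_eq n \<beta> c w)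
   \<or> (\<exists>w. (\<forall>g\<in>set w. \<exists>j<n. g = E j) \<and> word_eq n \<beta> c (Om # w))"

lemma valid_gen_simps [simp]:
  "valid_gen n Om" "valid_gen n OmI" "valid_gen n (E j) \<longleftrightarrow> j < n"
  unfolding valid_gen_def by auto

lemma set_Omega_pow [simp]:
  "set (Omega_pow k) = (if k = 0 then {} else if 0 < k then {Om} else {OmI})"
  unfolding Omega_pow_def by auto

definition cyc_succ :: "nat \<Rightarrow> nat \<Rightarrow> nat" where
  "cyc_succ n j = (j + 1) mod n"

definition cyc_pred :: "nat \<Rightarrow> nat \<Rightarrow> nat" where
  "cyc_pred n j = (j + n - 1) mod n"

lemma cyc_succ_less [simp]: "j < n \<Longrightarrow> cyc_succ n j < n"
  unfolding cyc_succ_def by simp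

lemma cyc_pred_less [simp]: "j < n \<Longrightarrow> cyc_pred n j < n"
  unfolding cyc_pred_def by simp

lemma cyc_pred_succ [simp]: "j < n \<Longrightarrow> cyc_pred n (cyc_succ n j) = j"
  unfolding cyc_succ_def cyc_pred_def by (cases "j + 1 = n") auto

lemma cyc_succ_pred [simp]: "j < n \<Longrightarrow> cyc_succ n (cyc_pred n j) = j"
  unfolding cyc_succ_def cyc_pred_def by (cases j) (auto simp: mod_Suc_eq)

context
  fixes n :: nat and \<beta> :: complex
begin

abbreviation word_equiv :: "gen list \<Rightarrow> gen list \<Rightarrow> bool" (infix "\<approx>" 50) where
  "u \<approx> v \<equiv> word_eq n \<beta> u v"

lemma word_eq_refl: "u \<approx> u"
  unfolding word_eq_def aTL_eq_def by (simp add: aTL_ideal.zero)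

lemma word_eq_sym: "u \<approx> v \<Longrightarrow> v \<approx> u"
  unfolding word_eq_def aTL_eq_def
  by (drule aTL_ideal_scale[where d = "-1"]) (simp add: algebra_simps)

lemma word_eq_trans [trans]: "u \<approx> v \<Longrightarrow> v \<approx> w \<Longrightarrow> u \<approx> w"
  unfolding word_eq_def aTL_eq_def
  by (drule (1) aTL_ideal_add) (simp add: algebra_simps)

lemma word_eq_cong:
  "u \<approx> v \<Longrightarrow> \<forall>g\<in>set a. valid_gen n g \<Longrightarrow> \<forall>g\<in>set b. valid_gen n g
    \<Longrightarrow> a @ u @ b \<approx> a @ v @ b"
  unfolding word_eq_def aTL_eq_def
  by (drule (2) aTL_ideal_sw) (simp add: sw_diff sw_wd)

lemma word_eq_if_rel: "(wd l, wd r) \<in> aTL_rel n \<beta> \<Longrightarrow> l \<approx> r"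
  unfolding word_eq_def aTL_eq_def
  using aTL_ideal.step[OF aTL_ideal.zero, of "wd l" "wd r" n \<beta> "[]" "[]" 1]
  by (simp add: sw_Nil)

lemma Om_OmI: "[Om, OmI] \<approx> []"
  by (rule word_eq_if_rel) (simp add: aTL_rel_def)

lemma OmI_Om: "[OmI, Om] \<approx> []"
  by (rule word_eq_if_rel) (simp add: aTL_rel_def)

lemma Om_E_OmI: "j < n \<Longrightarrow> [Om, E j, OmI] \<approx> [E (cyc_pred n j)]"
  by (rule word_eq_if_rel) (auto simp: aTL_rel_def cyc_pred_def)

lemma E_E_pred_E: "j < n \<Longrightarrow> [E j, E (cyc_pred n j), E j] \<approx> [E j]"
  by (rule word_eq_if_rel) (auto simp: aTL_rel_def cyc_pred_def)

lemma Om_Om_E1: "[Om, Om, E 1] \<approx> map E (rev [1..<n])"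
  by (rule word_eq_if_rel) (auto simp: aTL_rel_def)

lemma E_Om: "j < n \<Longrightarrow> [E j, Om] \<approx> [Om, E (cyc_succ n j)]"
proof -
  assume j: "j < n"
  let ?k = "cyc_succ n j"
  have k: "?k < n" using j by simp
  have "[Om, E ?k] \<approx> [Om, E ?k] @ [OmI, Om] @ []"
    using word_eq_cong[OF OmI_Om, of "[Om, E ?k]" "[]"] k by (simp add: word_eq_sym)
  also have "\<dots> = [] @ [Om, E ?k, OmI] @ [Om]" by simp
  also have "\<dots> \<approx> [] @ [E (cyc_pred n ?k)] @ [Om]"
    using k by (intro word_eq_cong Om_E_OmI) auto
  finally show ?thesis using j by (simp add: word_eq_sym)
qed

lemma E_OmI: "j < n \<Longrightarrow> [E j, OmI] \<approx> [OmI, E (cyc_pred n j)]"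
proof -
  assume j: "j < n"
  let ?k = "cyc_pred n j"
  have k: "?k < n" using j by simp
  have "[OmI, E ?k] \<approx> [OmI] @ [E ?k, Om] @ [OmI]"
    using word_eq_cong[OF Om_OmI, of "[OmI, E ?k]" "[]"] k by (simp add: word_eq_sym)
  also have "\<dots> \<approx> [OmI] @ [Om, E j] @ [OmI]"
    using E_Om[OF k] j by (intro word_eq_cong) auto
  also have "\<dots> = [] @ [OmI, Om] @ [E j, OmI]" by simp
  also have "\<dots> \<approx> [] @ [] @ [E j, OmI]"
    using j by (intro word_eq_cong OmI_Om) auto
  finally show ?thesis by (simp add: word_eq_sym)
qed

lemma e_word_Om:
  "set js \<subseteq> {..<n} \<Longrightarrow> map E js @ [Om] \<approx> Om # map E (map (cyc_succ n) js)"
proof (induction js)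
  case Nil
  then show ?case by (simp add: word_eq_refl)
next
  case (Cons j js)
  have "[E j] @ (map E js @ [Om]) @ [] \<approx> [E j] @ (Om # map E (map (cyc_succ n) js)) @ []"
    using Cons by (intro word_eq_cong) auto
  also have "\<dots> = [] @ [E j, Om] @ map E (map (cyc_succ n) js)" by simp
  also have "\<dots> \<approx> [] @ [Om, E (cyc_succ n j)] @ map E (map (cyc_succ n) js)"
    using Cons.prems by (intro word_eq_cong E_Om) auto
  finally show ?case by simp
qed

lemma e_word_OmI:
  "set js \<subseteq> {..<n} \<Longrightarrow> map E js @ [OmI] \<approx> OmI # map E (map (cyc_pred n) js)"
proof (induction js)
  case Nil
  then show ?case by (simp add: word_eq_refl)
next
  case (Cons j js)
  have "[E j] @ (map E js @ [OmI]) @ [] \<approx> [E j] @ (OmI # map E (map (cyc_pred n) js)) @ []"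
    using Cons by (intro word_eq_cong) auto
  also have "\<dots> = [] @ [E j, OmI] @ map E (map (cyc_pred n) js)" by simp
  also have "\<dots> \<approx> [] @ [OmI, E (cyc_pred n j)] @ map E (map (cyc_pred n) js)"
    using Cons.prems by (intro word_eq_cong E_OmI) auto
  finally show ?case by simp
qed

lemma OmI_e_word_Om:
  "set js \<subseteq> {..<n} \<Longrightarrow> OmI # map E js @ [Om] \<approx> map E (map (cyc_succ n) js)"
proof -
  assume js: "set js \<subseteq> {..<n}"
  have "[OmI] @ (map E js @ [Om]) @ [] \<approx> [OmI] @ (Om # map E (map (cyc_succ n) js)) @ []"
    using js by (intro word_eq_cong e_word_Om) auto
  also have "\<dots> = [] @ [OmI, Om] @ map E (map (cyc_succ n) js)" by simp
  also have "\<dots> \<approx> [] @ [] @ map E (map (cyc_succ n) js)"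
    using js by (intro word_eq_cong OmI_Om) auto
  finally show ?thesis by simp
qed

lemma Omega_pow_snoc_Om: "Omega_pow k @ [Om] \<approx> Omega_pow (k + 1)"
proof (cases "0 \<le> k")
  case True
  then have "nat (k + 1) = Suc (nat k)" by simp
  then show ?thesis
    using True by (simp add: Omega_pow_def replicate_append_same word_eq_refl)
next
  case False
  define m where "m = nat (- k - 1)"
  have "nat (- k) = Suc m" using False unfolding m_def by simp
  then have "Omega_pow k @ [Om] = replicate m OmI @ [OmI, Om] @ []"
    using False by (simp add: Omega_pow_def flip: replicate_append_same)
  moreover have "Omega_pow (k + 1) = replicate m OmI @ [] @ []"
    using False unfolding m_def Omega_pow_def by auto
  ultimately show ?thesis by (simp only:) (intro word_eq_cong OmI_Om; simp)
qed

lemma Omega_pow_snoc_OmI: "Omega_pow k @ [OmI] \<approx> Omega_pow (k - 1)"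
proof (cases "k \<le> 0")
  case True
  then have "nat (- (k - 1)) = Suc (nat (- k))" by simp
  then show ?thesis
    using True by (simp add: Omega_pow_def replicate_append_same word_eq_refl)
next
  case False
  define m where "m = nat (k - 1)"
  have "nat k = Suc m" using False unfolding m_def by simp
  then have "Omega_pow k @ [OmI] = replicate m Om @ [Om, OmI] @ []"
    using False by (simp add: Omega_pow_def flip: replicate_append_same)
  moreover have "Omega_pow (k - 1) = replicate m Om @ [] @ []"
    using False unfolding m_def Omega_pow_def by auto
  ultimately show ?thesis by (simp only:) (intro word_eq_cong Om_OmI; simp)
qed

lemma Omega_pow_add: "Omega_pow k @ Omega_pow l \<approx> Omega_pow (k + l)"
proof (induction l rule: int_induct[where k = 0])
  case base
  show ?case by (simp add: Omega_pow_def word_eq_refl)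
next
  case (step1 l)
  have "Omega_pow k @ Omega_pow (l + 1) \<approx> Omega_pow k @ (Omega_pow l @ [Om]) @ []"
    using word_eq_cong[OF Omega_pow_snoc_Om, of "Omega_pow k" "[]" l] by (simp add: word_eq_sym)
  also have "\<dots> = [] @ (Omega_pow k @ Omega_pow l) @ [Om]" by simp
  also have "\<dots> \<approx> [] @ Omega_pow (k + l) @ [Om]"
    using step1.IH by (intro word_eq_cong) auto
  also have "\<dots> \<approx> Omega_pow (k + (l + 1))"
    using Omega_pow_snoc_Om[of "k + l"] by (simp add: add.assoc)
  finally show ?case .
next
  case (step2 l)
  have "Omega_pow k @ Omega_pow (l - 1) \<approx> Omega_pow k @ (Omega_pow l @ [OmI]) @ []"
    using word_eq_cong[OF Omega_pow_snoc_OmI, of "Omega_pow k" "[]" l] by (simp add: word_eq_sym)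
  also have "\<dots> = [] @ (Omega_pow k @ Omega_pow l) @ [OmI]" by simp
  also have "\<dots> \<approx> [] @ Omega_pow (k + l) @ [OmI]"
    using step2.IH by (intro word_eq_cong) auto
  also have "\<dots> \<approx> Omega_pow (k + (l - 1))"
    using Omega_pow_snoc_OmI[of "k + l"] by (simp add: algebra_simps)
  finally show ?case .
qed

lemma Omega_pow_Om_commute: "Om # Omega_pow k \<approx> Omega_pow k @ [Om]"
proof -
  have "Om # Omega_pow k = Omega_pow 1 @ Omega_pow k" by (simp add: Omega_pow_def)
  also have "\<dots> \<approx> Omega_pow (k + 1)" using Omega_pow_add[of 1 k] by (simp add: add.commute)
  also have "\<dots> \<approx> Omega_pow k @ [Om]" by (rule word_eq_sym, rule Omega_pow_snoc_Om)
  finally show ?thesis .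
qed

lemma word_eq_Omega_pow_e_word:
  assumes "\<forall>g\<in>set c. valid_gen n g"
  shows "\<exists>k js. set js \<subseteq> {..<n} \<and> c \<approx> Omega_pow k @ map E js"
  using assms
proof (induction c rule: rev_induct)
  case Nil
  show ?case by (intro exI[of _ 0] exI[of _ "[]"]) (simp add: Omega_pow_def word_eq_refl)
next
  case (snoc g c)
  then obtain k js where js: "set js \<subseteq> {..<n}" and c: "c \<approx> Omega_pow k @ map E js"
    by auto
  have g: "valid_gen n g" using snoc.prems by simp
  have c_g: "[] @ c @ [g] \<approx> [] @ (Omega_pow k @ map E js) @ [g]"
    using c g by (intro word_eq_cong) auto
  show ?case
  proof (cases g)
    case Om
    let ?js = "map (cyc_succ n) js"
    note c_g
    also have "[] @ (Omega_pow k @ map E js) @ [g] = Omega_pow k @ (map E js @ [Om]) @ []"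
      using Om by simp
    also have "\<dots> \<approx> Omega_pow k @ (Om # map E ?js) @ []"
      using js by (intro word_eq_cong e_word_Om) auto
    also have "\<dots> = [] @ (Omega_pow k @ [Om]) @ map E ?js" by simp
    also have "\<dots> \<approx> [] @ Omega_pow (k + 1) @ map E ?js"
      using js by (intro word_eq_cong Omega_pow_snoc_Om) auto
    finally show ?thesis using js by (intro exI[of _ "k + 1"] exI[of _ ?js]) auto
  next
    case OmI
    let ?js = "map (cyc_pred n) js"
    note c_g
    also have "[] @ (Omega_pow k @ map E js) @ [g] = Omega_pow k @ (map E js @ [OmI]) @ []"
      using OmI by simp
    also have "\<dots> \<approx> Omega_pow k @ (OmI # map E ?js) @ []"
      using js by (intro word_eq_cong e_word_OmI) auto
    also have "\<dots> = [] @ (Omega_pow k @ [OmI]) @ map E ?js" by simp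
    also have "\<dots> \<approx> [] @ Omega_pow (k - 1) @ map E ?js"
      using js by (intro word_eq_cong Omega_pow_snoc_OmI) auto
    finally show ?thesis using js by (intro exI[of _ "k - 1"] exI[of _ ?js]) auto
  next
    case (E j)
    then show ?thesis using c_g js g by (intro exI[of _ k] exI[of _ "js @ [j]"]) auto
  qed
qed

lemma Omega_pow_E_cyc_succ:
  assumes V: "Omega_pow s @ [E j] \<approx> map E V" "set V \<subseteq> {..<n}" and j: "j < n"
  shows "Omega_pow s @ [E (cyc_succ n j)] \<approx> map E (map (cyc_succ n) V)"
proof -
  let ?j' = "cyc_succ n j"
  have "Omega_pow s @ [E ?j'] \<approx> [] @ [OmI, Om] @ (Omega_pow s @ [E ?j'])"
    using word_eq_cong[OF OmI_Om, of "[]" "Omega_pow s @ [E ?j']"] j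
    by (simp add: word_eq_sym)
  also have "\<dots> = [OmI] @ (Om # Omega_pow s) @ [E ?j']" by simp
  also have "\<dots> \<approx> [OmI] @ (Omega_pow s @ [Om]) @ [E ?j']"
    using j by (intro word_eq_cong Omega_pow_Om_commute) auto
  also have "\<dots> = (OmI # Omega_pow s) @ [Om, E ?j'] @ []" by simp
  also have "\<dots> \<approx> (OmI # Omega_pow s) @ [E j, Om] @ []"
    using j by (intro word_eq_cong word_eq_sym[OF E_Om]) auto
  also have "\<dots> = [OmI] @ (Omega_pow s @ [E j]) @ [Om]" by simp
  also have "\<dots> \<approx> [OmI] @ map E V @ [Om]"
    using V by (intro word_eq_cong) auto
  also have "\<dots> \<approx> map E (map (cyc_succ n) V)"
    using OmI_e_word_Om[OF V(2)] by simp
  finally show ?thesis .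
qed

lemma Omega_pow_E_e_word_all:
  assumes j0: "j0 < n" and V0: "set V0 \<subseteq> {..<n}" "Omega_pow s @ [E j0] \<approx> map E V0"
    and j: "j < n"
  shows "\<exists>V. set V \<subseteq> {..<n} \<and> Omega_pow s @ [E j] \<approx> map E V"
proof -
  have "\<exists>V. set V \<subseteq> {..<n} \<and> Omega_pow s @ [E ((j0 + m) mod n)] \<approx> map E V" for m
  proof (induction m)
    case 0
    then show ?case using j0 V0 by auto
  next
    case (Suc m)
    then obtain V where "set V \<subseteq> {..<n}" "Omega_pow s @ [E ((j0 + m) mod n)] \<approx> map E V"
      by blast
    then have "Omega_pow s @ [E (cyc_succ n ((j0 + m) mod n))] \<approx> map E (map (cyc_succ n) V)"
      using j0 by (intro Omega_pow_E_cyc_succ) auto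
    moreover have "cyc_succ n ((j0 + m) mod n) = (j0 + Suc m) mod n"
      unfolding cyc_succ_def by (simp add: mod_Suc_eq)
    ultimately show ?case using \<open>set V \<subseteq> {..<n}\<close> j0 by (intro exI[of _ "map (cyc_succ n) V"]) auto
  qed
  from this[of "j + n - j0"] show ?thesis using j j0 by simp
qed

lemma Omega_pow_minus2_e_word:
  assumes "Suc k < n"
  shows "Omega_pow (-2) @ map E (rev [Suc k..<n]) \<approx> map E [1..<k + 2]"
  using assms
proof (induction k)
  case 0
  have "Omega_pow (-2) @ map E (rev [1..<n]) @ [] \<approx> Omega_pow (-2) @ [Om, Om, E 1] @ []"
    using "0" by (intro word_eq_cong word_eq_sym[OF Om_Om_E1]) auto
  also have "\<dots> = [] @ (Omega_pow (-2) @ Omega_pow 2) @ [E 1]"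
    by (simp add: Omega_pow_def numeral_2_eq_2)
  also have "\<dots> \<approx> [] @ Omega_pow 0 @ [E 1]"
    using "0" Omega_pow_add[of "-2" 2] by (intro word_eq_cong) auto
  finally show ?case by (simp add: Omega_pow_def)
next
  case (Suc k)
  let ?i = "Suc (Suc k)"
  let ?B = "Omega_pow (-2) @ map E (rev [Suc ?i..<n])"
  have "cyc_succ n (Suc k) = ?i"
    using Suc.prems unfolding cyc_succ_def by simp
  then have pred_i: "cyc_pred n ?i = Suc k"
    using cyc_pred_succ[of "Suc k" n] Suc.prems by simp
  have "Omega_pow (-2) @ map E (rev [?i..<n]) = ?B @ [E ?i] @ []"
    using Suc.prems by (simp add: upt_conv_Cons)
  also have "\<dots> \<approx> ?B @ [E ?i, E (cyc_pred n ?i), E ?i] @ []"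
    using Suc.prems by (intro word_eq_cong word_eq_sym[OF E_E_pred_E]) auto
  also have "\<dots> = [] @ (Omega_pow (-2) @ map E (rev [Suc k..<n])) @ [E ?i]"
    using Suc.prems by (simp add: pred_i upt_conv_Cons)
  also have "\<dots> \<approx> [] @ map E [1..<k + 2] @ [E ?i]"
    using Suc by (intro word_eq_cong) auto
  finally show ?case by simp
qed

lemma Omega_pow_pm2_E_e_word:
  assumes n: "1 < n" and s: "s = 2 \<or> s = -2" and j: "j < n"
  shows "\<exists>V. set V \<subseteq> {..<n} \<and> Omega_pow s @ [E j] \<approx> map E V"
  using s
proof
  assume "s = 2"
  have "Omega_pow 2 @ [E 1] \<approx> map E (rev [1..<n])"
    using Om_Om_E1 by (simp add: Omega_pow_def numeral_2_eq_2)
  moreover have "set (rev [1..<n]) \<subseteq> {..<n}" by auto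
  ultimately show ?thesis
    using Omega_pow_E_e_word_all[of 1 "rev [1..<n]" s j] n j \<open>s = 2\<close> by blast
next
  assume "s = -2"
  have "Omega_pow (-2) @ map E (rev [Suc (n - 2)..<n]) \<approx> map E [1..<n - 2 + 2]"
    using n by (intro Omega_pow_minus2_e_word) auto
  moreover have "map E (rev [Suc (n - 2)..<n]) = [E (n - 1)]"
    using n by (simp add: upt_conv_Cons)
  moreover have "n - 2 + 2 = n"
    using n by simp
  ultimately have "Omega_pow (-2) @ [E (n - 1)] \<approx> map E [1..<n]" by (simp only:)
  moreover have "set [1..<n] \<subseteq> {..<n}" by auto
  ultimately show ?thesis
    using Omega_pow_E_e_word_all[of "n - 1" "[1..<n]" s j] n j \<open>s = -2\<close> by auto
qed

lemma Omega_pow_absorb_pm2: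
  assumes n: "1 < n" and s: "s = 2 \<or> s = -2" and j: "j < n" and js: "set js \<subseteq> {..<n}"
  shows "\<exists>V. set V \<subseteq> {..<n} \<and> Omega_pow k @ map E (j # js) \<approx> Omega_pow (k - s) @ map E (V @ js)"
proof -
  obtain V where V: "set V \<subseteq> {..<n}" "Omega_pow s @ [E j] \<approx> map E V"
    using Omega_pow_pm2_E_e_word[OF n s j] by blast
  have "Omega_pow k @ map E (j # js) \<approx> [] @ (Omega_pow (k - s) @ Omega_pow s) @ map E (j # js)"
    using word_eq_cong[OF Omega_pow_add[of "k - s" s], of "[]" "map E (j # js)"] j js
    by (auto intro: word_eq_sym)
  also have "\<dots> = Omega_pow (k - s) @ (Omega_pow s @ [E j]) @ map E js" by simp
  also have "\<dots> \<approx> Omega_pow (k - s) @ map E V @ map E js"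
    using V js by (intro word_eq_cong) auto
  finally show ?thesis using V by auto
qed

lemma has_normal_form_word_eq:
  "c \<approx> d \<Longrightarrow> has_normal_form n \<beta> d \<Longrightarrow> has_normal_form n \<beta> c"
  unfolding has_normal_form_def by (meson word_eq_trans)

lemma has_normal_form_Omega_pow_e_word:
  assumes n: "1 < n" and "set js \<subseteq> {..<n}"
  shows "has_normal_form n \<beta> (Omega_pow k @ map E js)"
  using assms(2)
proof (induction "nat \<bar>k\<bar>" arbitrary: k js rule: less_induct)
  case less
  show ?case
  proof (cases js)
    case Nil
    then show ?thesis unfolding has_normal_form_def by (auto intro: word_eq_refl)
  next
    case (Cons j js')
    with less.prems have j: "j < n" and js': "set js' \<subseteq> {..<n}" by auto
    consider "k = 0" | "k = 1" | "k = -1" | "2 \<le> \<bar>k\<bar>" by linarith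
    then show ?thesis
    proof cases
      case 1
      then show ?thesis using less.prems unfolding has_normal_form_def
        by (intro disjI2 disjI1 exI[of _ "map E js"]) (auto simp: Omega_pow_def word_eq_refl)
    next
      case 2
      then show ?thesis using less.prems unfolding has_normal_form_def
        by (intro disjI2 exI[of _ "map E js"]) (auto simp: Omega_pow_def word_eq_refl)
    next
      case 3
      then obtain V where "set V \<subseteq> {..<n}" "Omega_pow k @ map E js \<approx> Om # map E (V @ js')"
        using Omega_pow_absorb_pm2[OF n _ j js', of "-2" k] Cons by (auto simp: Omega_pow_def)
      then show ?thesis using js' unfolding has_normal_form_def
        by (intro disjI2 exI[of _ "map E (V @ js')"]) auto
    next
      case 4
      define s :: int where "s = (if 0 < k then 2 else -2)"
      have "s = 2 \<or> s = -2" unfolding s_def by simp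
      then obtain V where "set V \<subseteq> {..<n}"
        and "Omega_pow k @ map E js \<approx> Omega_pow (k - s) @ map E (V @ js')"
        using Omega_pow_absorb_pm2[OF n _ j js'] Cons by blast
      moreover have "nat \<bar>k - s\<bar> < nat \<bar>k\<bar>" using 4 unfolding s_def by auto
      ultimately show ?thesis
        using less.hyps[of "k - s" "V @ js'"] js' by (auto intro: has_normal_form_word_eq)
    qed
  qed
qed

end

theorem proposition2p1:
  fixes n :: nat and q :: complex and c :: "gen list"
  assumes "n > 2" and "q \<noteq> 0" and "\<forall>g\<in>set c. valid_gen n g"
  shows "(\<exists>k::int. aTL_eq n (- q - inverse q) (wd c) (wd (Omega_pow k)))
       \<or> (\<exists>w. (\<forall>g\<in>set w. \<exists>j<n. g = E j) \<and> aTL_eq n (- q - inverse q) (wd c) (wd w))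
       \<or> (\<exists>w. (\<forall>g\<in>set w. \<exists>j<n. g = E j) \<and> aTL_eq n (- q - inverse q) (wd c) (wd (Om # w)))"
proof -
  \<comment> \<open>The rewriting works for every \<beta>.\<close>
  let ?\<beta> = "- q - inverse q"
  obtain k js where "set js \<subseteq> {..<n}" and "word_eq n ?\<beta> c (Omega_pow k @ map E js)"
    using word_eq_Omega_pow_e_word assms(3) by blast
  moreover have "1 < n" using assms(1) by simp
  ultimately have "has_normal_form n ?\<beta> c"
    using has_normal_form_word_eq has_normal_form_Omega_pow_e_word by blast
  then show ?thesis unfolding has_normal_form_def word_eq_def .
qed

end
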